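(* Let $v$ be a simple game on $N=\{1,\dots,n\}$ and $i\in N$ a player with $\mathrm{Nuc}_i(v)<1$. Then $\mathrm{Nuc}_i(v)\le\frac12$.
   Context: A simple game on $N$ is a surjective, monotone map $v\colon 2^N\to\{0,1\}$. For $x\in\mathbb{R}^n$ and $S\subseteq N$ let $x(S)=\sum_{j\in S}x_j$ and the excess $e(S,x)=v(S)-x(S)$. Let $E(x)\in\mathbb{R}^{2^n}$ be the vector of all excesses $e(S,x)$, $S\subseteq N$, sorted in weakly decreasing order. $x$ is lexicographically smaller than $y$ if $E_k(x)<E_k(y)$ for the smallest $k$ with $E_k(x)\ne E_k(y)$. The nucleolus $\mathrm{Nuc}(v)$ is the unique lexicographically minimal vector $x$ among all $x\in\mathbb{R}^n$ with $x(N)\le 1$; for simple games it satisfies $\mathrm{Nuc}(v)\in\mathbb{R}^n_{\ge0}$ and $\sum_j\mathrm{Nuc}_j(v)=1$. *)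

theory Defs
  imports Complex_Main "HOL-Library.Multiset"
begin

text \<open>Players form a finite type 'n (so N = UNIV, |N| = n), payoff vectors are
  functions 'n \<Rightarrow> real, i.e. elements of R^n.\<close>

definition simple_game :: "('n set \<Rightarrow> real) \<Rightarrow> bool" where
  "simple_game v \<longleftrightarrow> range v = {0, 1} \<and> mono v"

definition coal_sum :: "('n \<Rightarrow> real) \<Rightarrow> 'n set \<Rightarrow> real" where
  "coal_sum x S = (\<Sum>j\<in>S. x j)"

definition excess :: "('n set \<Rightarrow> real) \<Rightarrow> 'n set \<Rightarrow> ('n \<Rightarrow> real) \<Rightarrow> real" where
  "excess v S x = v S - coal_sum x S"

definition excess_vector :: "('n::finite set \<Rightarrow> real) \<Rightarrow> ('n \<Rightarrow> real) \<Rightarrow> real list" where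
  "excess_vector v x =
     rev (sorted_list_of_multiset (image_mset (\<lambda>S. excess v S x) (mset_set (Pow (UNIV :: 'n set)))))"

definition lex_smaller :: "real list \<Rightarrow> real list \<Rightarrow> bool" where
  "lex_smaller xs ys \<longleftrightarrow>
     (\<exists>k < length xs. k < length ys \<and> take k xs = take k ys \<and> xs ! k < ys ! k)"

definition lex_minimal :: "('n::finite set \<Rightarrow> real) \<Rightarrow> ('n \<Rightarrow> real) \<Rightarrow> bool" where
  "lex_minimal v x \<longleftrightarrow> coal_sum x UNIV \<le> 1 \<and>
     (\<forall>y. coal_sum y UNIV \<le> 1 \<longrightarrow> \<not> lex_smaller (excess_vector v y) (excess_vector v x))"

definition nucleolus :: "('n::finite set \<Rightarrow> real) \<Rightarrow> ('n \<Rightarrow> real)" where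
  "nucleolus v = (THE x. lex_minimal v x)"

end

theory Submission
  imports Defs "HOL-Analysis.Analysis"
begin

text \<open>The nucleolus x minimizes the sorted excess vector lexicographically, so no feasible change
  of x can lower the largest excess on the coalitions it affects. For a transfer of weight from
  player i to player j this means: for every coalition containing j but not i there is a
  coalition containing i but not j with at least the same excess.

  Now suppose 1/2 < x i < 1. If N - {i} wins, its excess is x i > 1/2, while every coalition
  containing i has excess at most 1 - x i < 1/2. If N - {i} loses, i is a veto player; the
  payoff vector concentrated on i has no positive excess, hence neither has x, so a player
  k \<noteq> i with x k > 0 is a veto player too. Then every coalition containing i but not k loses
  and has excess at most - x i < x i - 1, the excess of N - {i}.

  Because the nucleolus is defined by a definite description, its existence and uniqueness are
  needed as well: uniqueness by averaging two minimizers, existence by minimizing the k-th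
  largest excess successively over nested compact sets.\<close>

section \<open>Values of a function in decreasing order\<close>

definition desc_values :: "'a set \<Rightarrow> ('a \<Rightarrow> real) \<Rightarrow> real list" where
  "desc_values A f = rev (sorted_list_of_multiset (image_mset f (mset_set A)))"

lemma mset_desc_values: "mset (desc_values A f) = image_mset f (mset_set A)"
  by (simp add: desc_values_def)

lemma length_desc_values: "finite A \<Longrightarrow> length (desc_values A f) = card A"
  by (metis mset_desc_values size_image_mset size_mset size_mset_set)

lemma length_filter_desc_values:
  "finite A \<Longrightarrow> length (filter P (desc_values A f)) = card {a\<in>A. P (f a)}"
  by (simp flip: size_mset image_mset_filter_mset_swap add: mset_filter mset_desc_values)

lemma sorted_desc_values: "sorted_wrt (\<ge>) (desc_values A f)"
  unfolding desc_values_def sorted_wrt_rev by simp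

lemma desc_values_nth_antimono:
  "i \<le> j \<Longrightarrow> j < length (desc_values A f) \<Longrightarrow> desc_values A f ! j \<le> desc_values A f ! i"
  by (cases "i = j") (auto intro: sorted_wrt_nth_less[OF sorted_desc_values])

lemma desc_values_nth_ge_iff:
  assumes A: "finite A" and k: "k < card A"
  shows "t \<le> desc_values A f ! k \<longleftrightarrow> k < card {a\<in>A. t \<le> f a}"
proof -
  let ?L = "desc_values A f"
  let ?I = "{i. i < length ?L \<and> t \<le> ?L ! i}"
  have len: "length ?L = card A" using A by (rule length_desc_values)
  have card_eq: "card {a\<in>A. t \<le> f a} = card ?I"
    using length_filter_desc_values[OF A, of "\<lambda>u. t \<le> u" f] length_filter_conv_card
    by metis
  show ?thesis
  proof
    assume "t \<le> ?L ! k"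
    then have "{..k} \<subseteq> ?I"
      using desc_values_nth_antimono[of _ k A f] k len by fastforce
    then have "card {..k} \<le> card ?I" by (intro card_mono) auto
    then show "k < card {a\<in>A. t \<le> f a}" using card_eq by simp
  next
    assume lt: "k < card {a\<in>A. t \<le> f a}"
    show "t \<le> ?L ! k"
    proof (rule ccontr)
      assume "\<not> t \<le> ?L ! k"
      then have "?I \<subseteq> {..<k}"
        using desc_values_nth_antimono[of k _ A f] by (auto simp: not_less) (meson order.trans not_le)
      then have "card ?I \<le> k" using card_mono[of "{..<k}" ?I] by simp
      then show False using lt card_eq by simp
    qed
  qed
qed

lemma desc_values_nth_le_shift:
  assumes A: "finite A" and k: "k < card A" and shift: "\<And>a. a \<in> A \<Longrightarrow> f a \<le> g a + d"
  shows "desc_values A f ! k \<le> desc_values A g ! k + d"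
proof -
  let ?t = "desc_values A f ! k"
  have "k < card {a\<in>A. ?t \<le> f a}" using desc_values_nth_ge_iff[OF A k, of ?t f] by simp
  also have "\<dots> \<le> card {a\<in>A. ?t - d \<le> g a}"
    using A shift by (intro card_mono) (auto, smt (verit))
  finally have "?t - d \<le> desc_values A g ! k" using desc_values_nth_ge_iff[OF A k] by blast
  then show ?thesis by simp
qed

lemma desc_values_nth_0_ge:
  assumes A: "finite A" and a: "a \<in> A"
  shows "f a \<le> desc_values A f ! 0"
proof -
  have "0 < card A" using A a by (auto simp: card_gt_0_iff)
  moreover have "0 < card {b\<in>A. f a \<le> f b}" using A a by (auto simp: card_gt_0_iff)
  ultimately show ?thesis using desc_values_nth_ge_iff[OF A] by simp
qed

lemma lex_smaller_desc_values_threshold: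
  assumes A: "finite A"
    and lt: "card {a\<in>A. t \<le> g a} < card {a\<in>A. t \<le> f a}"
    and le: "\<And>s. t < s \<Longrightarrow> card {a\<in>A. s \<le> g a} \<le> card {a\<in>A. s \<le> f a}"
  shows "lex_smaller (desc_values A g) (desc_values A f)"
proof -
  let ?G = "desc_values A g" and ?F = "desc_values A f"
  define k where "k = card {a\<in>A. t \<le> g a}"
  have "card {a\<in>A. t \<le> f a} \<le> card A" using A by (intro card_mono) auto
  then have kA: "k < card A" using lt k_def by simp
  have len: "length ?G = card A" "length ?F = card A"
    using A by (simp_all add: length_desc_values)
  have Fk: "t \<le> ?F ! k" and Gk: "\<not> t \<le> ?G ! k"
    using desc_values_nth_ge_iff[OF A kA] lt k_def by simp_all
  obtain j where j: "?G ! j \<noteq> ?F ! j" and before: "\<forall>i<j. ?G ! i = ?F ! i"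
    using Fk Gk exists_least_iff[of "\<lambda>j. ?G ! j \<noteq> ?F ! j"] by force
  have jk: "j \<le> k" using before Fk Gk by (metis not_le)
  have take: "take j ?G = take j ?F"
    by (rule nth_equalityI) (use before jk kA len in auto)
  have "?G ! j < ?F ! j"
  proof (rule ccontr)
    assume "\<not> ?G ! j < ?F ! j"
    then have gt: "?F ! j < ?G ! j" using j by simp
    have "?F ! k \<le> ?F ! j" using desc_values_nth_antimono[of j k A f] jk kA len by simp
    then have "t < ?G ! j" using Fk gt by simp
    moreover have "j < card {a\<in>A. ?G ! j \<le> g a}"
      using desc_values_nth_ge_iff[OF A, of j "?G ! j" g] jk kA by simp
    moreover have "\<not> j < card {a\<in>A. ?G ! j \<le> f a}"
      using desc_values_nth_ge_iff[OF A, of j "?G ! j" f] gt jk kA by simp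
    ultimately show False using le by (meson leD less_le_trans)
  qed
  then show ?thesis
    unfolding lex_smaller_def using take jk kA len by (intro exI[of _ j]) auto
qed

lemma lex_smaller_desc_values_lower_max:
  assumes A: "finite A" and T: "T \<subseteq> A" "T \<noteq> {}"
    and same: "\<And>a. a \<in> A \<Longrightarrow> a \<notin> T \<Longrightarrow> g a = f a"
    and less: "\<And>a. a \<in> T \<Longrightarrow> g a < Max (f ` T)"
  shows "lex_smaller (desc_values A g) (desc_values A f)"
proof -
  let ?t = "Max (f ` T)"
  have "finite T" using T(1) A by (rule finite_subset)
  then have "?t \<in> f ` T" using T(2) by (intro Max_in) auto
  then obtain a0 where a0: "a0 \<in> T" "f a0 = ?t" by auto
  have sub: "{a\<in>A. s \<le> g a} \<subseteq> {a\<in>A. s \<le> f a}" if "?t \<le> s" for s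
    using that same less by (force simp: not_le)
  show ?thesis
  proof (rule lex_smaller_desc_values_threshold[OF A, of ?t])
    have "a0 \<in> {a\<in>A. ?t \<le> f a}" "a0 \<notin> {a\<in>A. ?t \<le> g a}"
      using a0 less[OF a0(1)] T by auto
    then have "{a\<in>A. ?t \<le> g a} \<subset> {a\<in>A. ?t \<le> f a}" using sub[of ?t] by blast
    then show "card {a\<in>A. ?t \<le> g a} < card {a\<in>A. ?t \<le> f a}"
      using A by (intro psubset_card_mono) auto
  next
    fix s assume "?t < s"
    then show "card {a\<in>A. s \<le> g a} \<le> card {a\<in>A. s \<le> f a}"
      using sub[of s] A by (intro card_mono) auto
  qed
qed

section \<open>Lexicographic minimizers of the excess vector\<close>

lemma excess_eq_sum: "excess v S x = v S - sum x S"
  by (simp add: excess_def coal_sum_def)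

lemma excess_vector_eq_desc_values:
  "excess_vector v x = desc_values (Pow UNIV) (\<lambda>S. excess v S x)"
  by (simp add: excess_vector_def desc_values_def)

lemma excess_Compl_singleton:
  fixes x :: "'n::finite \<Rightarrow> real"
  assumes "coal_sum x UNIV = 1"
  shows "excess v (- {k}) x = v (- {k}) - 1 + x k"
  using assms sum.remove[of UNIV k x]
  by (simp add: excess_eq_sum coal_sum_def Compl_eq_Diff_UNIV)

lemma lex_minimal_not_improvable:
  fixes v :: "'n::finite set \<Rightarrow> real"
  assumes lm: "lex_minimal v x" and y: "coal_sum y UNIV \<le> 1" and T: "T \<noteq> {}"
    and same: "\<And>S. S \<notin> T \<Longrightarrow> excess v S y = excess v S x"
    and less: "\<And>S. S \<in> T \<Longrightarrow> excess v S y < Max ((\<lambda>S. excess v S x) ` T)"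
  shows False
proof -
  have "lex_smaller (excess_vector v y) (excess_vector v x)"
    unfolding excess_vector_eq_desc_values
    by (rule lex_smaller_desc_values_lower_max) (use T same less in auto)
  then show False using lm y unfolding lex_minimal_def by blast
qed

lemma lex_minimal_coal_sum:
  fixes v :: "'n::finite set \<Rightarrow> real"
  assumes lm: "lex_minimal v x"
  shows "coal_sum x UNIV = 1"
proof (rule ccontr)
  assume "coal_sum x UNIV \<noteq> 1"
  then have lt: "sum x UNIV < 1" using lm unfolding lex_minimal_def coal_sum_def by simp
  define d where "d = (1 - sum x UNIV) / CARD('n)"
  have d: "0 < d" using lt by (simp add: d_def)
  define y where "y = (\<lambda>k. x k + d)"
  have sum_y: "sum y S = sum x S + d * card S" for S by (simp add: y_def sum.distrib)
  let ?T = "{S::'n set. S \<noteq> {}}"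
  show False
  proof (rule lex_minimal_not_improvable[OF lm, of y ?T])
    show "coal_sum y UNIV \<le> 1" using sum_y[of UNIV] by (simp add: coal_sum_def d_def)
    show "?T \<noteq> {}" by blast
    show "\<And>S. S \<notin> ?T \<Longrightarrow> excess v S y = excess v S x" by (simp add: excess_eq_sum y_def)
    fix S assume S: "S \<in> ?T"
    then have "excess v S y < excess v S x"
      using sum_y[of S] d by (simp add: excess_eq_sum card_gt_0_iff)
    also have "\<dots> \<le> Max ((\<lambda>S. excess v S x) ` ?T)" using S by (intro Max_ge) auto
    finally show "excess v S y < Max ((\<lambda>S. excess v S x) ` ?T)" .
  qed
qed

lemma lex_minimal_excess_le:
  fixes v :: "'n::finite set \<Rightarrow> real"
  assumes lm: "lex_minimal v x" and y: "coal_sum y UNIV \<le> 1"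
    and bound: "\<And>S. excess v S y \<le> c"
  shows "excess v S x \<le> c"
proof (rule ccontr)
  assume gt: "\<not> excess v S x \<le> c"
  let ?T = "{S. excess v S y \<noteq> excess v S x}"
  have ST: "S \<in> ?T" using bound[of S] gt by auto
  show False
  proof (rule lex_minimal_not_improvable[OF lm y, of ?T])
    show "?T \<noteq> {}" using ST by blast
    show "\<And>S. S \<notin> ?T \<Longrightarrow> excess v S y = excess v S x" by simp
    fix S' assume "S' \<in> ?T"
    have "excess v S x \<le> Max ((\<lambda>S. excess v S x) ` ?T)" using ST by (intro Max_ge) auto
    then show "excess v S' y < Max ((\<lambda>S. excess v S x) ` ?T)" using bound[of S'] gt by linarith
  qed
qed

lemma lex_minimal_balanced_surplus:
  fixes v :: "'n::finite set \<Rightarrow> real"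
  assumes lm: "lex_minimal v x" and ij: "i \<noteq> j" and S0: "j \<in> S0" "i \<notin> S0"
  shows "\<exists>S. i \<in> S \<and> j \<notin> S \<and> excess v S0 x \<le> excess v S x"
proof (rule ccontr)
  assume "\<not> ?thesis"
  then have lt: "\<And>S. i \<in> S \<Longrightarrow> j \<notin> S \<Longrightarrow> excess v S x < excess v S0 x" by force
  let ?I = "{S. i \<in> S \<and> j \<notin> S}" and ?T = "{S. (i \<in> S) \<noteq> (j \<in> S)}"
  define M where "M = Max ((\<lambda>S. excess v S x) ` ?I)"
  have "{i} \<in> ?I" using ij by simp
  then have "M \<in> (\<lambda>S. excess v S x) ` ?I" unfolding M_def by (intro Max_in) auto
  then have M_lt: "M < excess v S0 x" using lt by auto
  have le_M: "\<And>S. S \<in> ?I \<Longrightarrow> excess v S x \<le> M" unfolding M_def by (intro Max_ge) auto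
  define e where "e = (excess v S0 x - M) / 2"
  have e: "2 * e = excess v S0 x - M" by (simp add: e_def)
  define y where "y = (\<lambda>k. x k + (if k = j then e else 0) - (if k = i then e else 0))"
  have sum_y: "sum y S = sum x S + (if j \<in> S then e else 0) - (if i \<in> S then e else 0)" for S
    by (simp add: y_def sum.distrib sum_subtractf sum.delta)
  have S0_le: "excess v S0 x \<le> Max ((\<lambda>S. excess v S x) ` ?T)" using S0 by (intro Max_ge) auto
  show False
  proof (rule lex_minimal_not_improvable[OF lm, of y ?T])
    show "coal_sum y UNIV \<le> 1" using lm sum_y[of UNIV] unfolding lex_minimal_def coal_sum_def by simp
    show "?T \<noteq> {}" using S0 by blast
    show "\<And>S. S \<notin> ?T \<Longrightarrow> excess v S y = excess v S x" by (auto simp: excess_eq_sum sum_y)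
    fix S assume ST: "S \<in> ?T"
    show "excess v S y < Max ((\<lambda>S. excess v S x) ` ?T)"
    proof (cases "i \<in> S")
      case True
      then have "excess v S y = excess v S x + e" "excess v S x \<le> M"
        using ST le_M by (auto simp: excess_eq_sum sum_y)
      then show ?thesis using M_lt S0_le e by linarith
    next
      case False
      then have "excess v S y = excess v S x - e" using ST by (auto simp: excess_eq_sum sum_y)
      moreover have "excess v S x \<le> Max ((\<lambda>S. excess v S x) ` ?T)" using ST by (intro Max_ge) auto
      ultimately show ?thesis using M_lt e by linarith
    qed
  qed
qed

lemma lex_minimal_max_disagreement_lt:
  fixes v :: "'n::finite set \<Rightarrow> real"
  assumes lm: "lex_minimal v x" and y: "coal_sum y UNIV \<le> 1"
    and T: "T = {S. excess v S x \<noteq> excess v S y}" "T \<noteq> {}"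
  shows "Max ((\<lambda>S. excess v S x) ` T) < Max ((\<lambda>S. excess v S y) ` T)"
proof (rule ccontr)
  let ?Mx = "Max ((\<lambda>S. excess v S x) ` T)" and ?My = "Max ((\<lambda>S. excess v S y) ` T)"
  assume "\<not> ?Mx < ?My"
  define z where "z = (\<lambda>k. (x k + y k) / 2)"
  have sum_z: "sum z S = (sum x S + sum y S) / 2" for S
    unfolding z_def by (simp add: sum.distrib flip: sum_divide_distrib)
  have excess_z: "2 * excess v S z = excess v S x + excess v S y" for S
    by (simp add: excess_eq_sum sum_z algebra_simps)
  have "coal_sum z UNIV \<le> 1"
    using lm y sum_z[of UNIV] by (simp add: lex_minimal_def coal_sum_def)
  then show False
  proof (rule lex_minimal_not_improvable[OF lm _ T(2)])
    fix S assume "S \<notin> T"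
    then have "excess v S x = excess v S y" using T(1) by simp
    then show "excess v S z = excess v S x" using excess_z[of S] by linarith
  next
    fix S assume "S \<in> T"
    then have "excess v S x \<noteq> excess v S y" "excess v S x \<le> ?Mx" "excess v S y \<le> ?My"
      using T(1) by (auto intro: Max_ge)
    then show "excess v S z < ?Mx" using excess_z[of S] \<open>\<not> ?Mx < ?My\<close> by linarith
  qed
qed

lemma lex_minimal_unique:
  fixes v :: "'n::finite set \<Rightarrow> real"
  assumes lx: "lex_minimal v x" and ly: "lex_minimal v y"
  shows "x = y"
proof (rule ccontr)
  assume "x \<noteq> y"
  then obtain j where "x j \<noteq> y j" by auto
  define T where "T = {S. excess v S x \<noteq> excess v S y}"
  have "{j} \<in> T" using \<open>x j \<noteq> y j\<close> by (simp add: T_def excess_eq_sum)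
  then have T: "T \<noteq> {}" by blast
  have T': "T = {S. excess v S y \<noteq> excess v S x}" by (auto simp: T_def)
  have "coal_sum x UNIV \<le> 1" "coal_sum y UNIV \<le> 1"
    using lx ly by (simp_all add: lex_minimal_def)
  then have "Max ((\<lambda>S. excess v S x) ` T) < Max ((\<lambda>S. excess v S y) ` T)"
    and "Max ((\<lambda>S. excess v S y) ` T) < Max ((\<lambda>S. excess v S x) ` T)"
    using lex_minimal_max_disagreement_lt[OF lx _ T_def T]
      lex_minimal_max_disagreement_lt[OF ly _ T' T] by blast+
  then show False by simp
qed

section \<open>Existence of the nucleolus\<close>

definition kth_excess :: "('n::finite set \<Rightarrow> real) \<Rightarrow> nat \<Rightarrow> real^'n \<Rightarrow> real" where
  "kth_excess v k z = excess_vector v (\<lambda>j. z$j) ! k"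

lemma excess_le_excess_plus_dist:
  fixes z w :: "real^'n::finite"
  shows "excess v S (\<lambda>j. z$j) \<le> excess v S (\<lambda>j. w$j) + CARD('n) * dist z w"
proof -
  have "(\<Sum>j\<in>S. w$j - z$j) \<le> (\<Sum>j\<in>S. dist z w)"
  proof (rule sum_mono)
    fix j
    have "\<bar>(w - z)$j\<bar> \<le> norm (w - z)" by (rule component_le_norm_cart)
    then show "w$j - z$j \<le> dist z w" by (simp add: dist_norm norm_minus_commute)
  qed
  also have "\<dots> \<le> CARD('n) * dist z w"
    using card_mono[of UNIV S] by (simp add: mult_right_mono)
  finally show ?thesis by (simp add: excess_eq_sum sum_subtractf)
qed

lemma continuous_on_kth_excess:
  fixes v :: "'n::finite set \<Rightarrow> real"
  assumes k: "k < card (Pow (UNIV::'n set))"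
  shows "continuous_on UNIV (kth_excess v k)"
proof (rule lipschitz_on_continuous_on)
  have shift: "kth_excess v k z \<le> kth_excess v k w + CARD('n) * dist z w" for z w
    unfolding kth_excess_def excess_vector_eq_desc_values
    by (rule desc_values_nth_le_shift) (use k excess_le_excess_plus_dist in auto)
  show "CARD('n)-lipschitz_on UNIV (kth_excess v k)"
  proof (rule lipschitz_onI)
    fix z w :: "real^'n"
    show "dist (kth_excess v k z) (kth_excess v k w) \<le> CARD('n) * dist z w"
      using shift[of z w] shift[of w z] by (simp add: dist_real_def dist_commute abs_le_iff)
  qed simp
qed

text \<open>The bound by the value at 0 in the first stage only makes that stage bounded.\<close>

fun nucleolus_stage :: "('n::finite set \<Rightarrow> real) \<Rightarrow> nat \<Rightarrow> (real^'n) set" where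
  "nucleolus_stage v 0 = {z. (\<Sum>j\<in>UNIV. z$j) \<le> 1 \<and> kth_excess v 0 z \<le> kth_excess v 0 0}"
| "nucleolus_stage v (Suc k) =
     {z \<in> nucleolus_stage v k. \<forall>w\<in>nucleolus_stage v k. kth_excess v k z \<le> kth_excess v k w}"

lemma nucleolus_stage_antimono: "j \<le> k \<Longrightarrow> nucleolus_stage v k \<subseteq> nucleolus_stage v j"
  by (induction k) (auto simp: le_Suc_eq)

lemma compact_nucleolus_stage_0:
  fixes v :: "'n::finite set \<Rightarrow> real"
  shows "compact (nucleolus_stage v 0)"
proof -
  let ?c = "kth_excess v 0 0"
  define a where "a k = v {k} - ?c" for k
  define b where "b = 1 + (\<Sum>k\<in>UNIV. \<bar>a k\<bar>)"
  have lower: "a k \<le> z$k" if "z \<in> nucleolus_stage v 0" for z k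
  proof -
    have "excess v {k} (\<lambda>j. z$j) \<le> kth_excess v 0 z"
      unfolding kth_excess_def excess_vector_eq_desc_values by (rule desc_values_nth_0_ge) auto
    then show ?thesis using that by (simp add: a_def excess_eq_sum)
  qed
  have upper: "z$j \<le> b" if z: "z \<in> nucleolus_stage v 0" for z j
  proof -
    have "(\<Sum>k\<in>UNIV. z$k) = z$j + (\<Sum>k\<in>UNIV - {j}. z$k)" by (rule sum.remove) auto
    moreover have "(\<Sum>k\<in>UNIV - {j}. - \<bar>a k\<bar>) \<le> (\<Sum>k\<in>UNIV - {j}. z$k)"
      using lower[OF z] by (intro sum_mono) (smt (verit))
    moreover have "(\<Sum>k\<in>UNIV - {j}. \<bar>a k\<bar>) \<le> (\<Sum>k\<in>UNIV. \<bar>a k\<bar>)" by (intro sum_mono2) auto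
    ultimately show ?thesis using z by (simp add: b_def sum_negf)
  qed
  have "nucleolus_stage v 0 \<subseteq> cbox (\<chi> k. a k) (\<chi> _. b)"
    using lower upper by (auto simp: mem_box_cart)
  then have "bounded (nucleolus_stage v 0)" by (rule bounded_subset[OF bounded_cbox])
  moreover have "closed (nucleolus_stage v 0)"
  proof -
    have "nucleolus_stage v 0 = {z. (\<Sum>j\<in>UNIV. z$j) \<le> 1} \<inter> {z. kth_excess v 0 z \<le> ?c}"
      by auto
    moreover have "closed {z::real^'n. (\<Sum>j\<in>UNIV. z$j) \<le> 1}"
      by (intro closed_Collect_le continuous_intros)
    moreover have "closed {z. kth_excess v 0 z \<le> ?c}"
      by (intro closed_Collect_le continuous_on_kth_excess continuous_intros) simp
    ultimately show ?thesis by auto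
  qed
  ultimately show ?thesis by (simp add: compact_eq_bounded_closed)
qed

lemma nucleolus_stage_compact_nonempty:
  fixes v :: "'n::finite set \<Rightarrow> real"
  assumes "k \<le> card (Pow (UNIV::'n set))"
  shows "compact (nucleolus_stage v k) \<and> nucleolus_stage v k \<noteq> {}"
  using assms
proof (induction k)
  case 0
  have "0 \<in> nucleolus_stage v 0" by simp
  then show ?case using compact_nucleolus_stage_0 by blast
next
  case (Suc k)
  then have IH: "compact (nucleolus_stage v k)" "nucleolus_stage v k \<noteq> {}" by auto
  have cont: "continuous_on (nucleolus_stage v k) (kth_excess v k)"
    using Suc.prems by (intro continuous_on_subset[OF continuous_on_kth_excess]) auto
  have "nucleolus_stage v (Suc k) = nucleolus_stage v k \<inter>
      (\<Inter>w\<in>nucleolus_stage v k. {z. kth_excess v k z \<le> kth_excess v k w})"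
    by auto
  moreover have "closed (\<Inter>w\<in>nucleolus_stage v k. {z. kth_excess v k z \<le> kth_excess v k w})"
    using Suc.prems
    by (intro closed_INT ballI closed_Collect_le continuous_on_kth_excess continuous_intros) simp
  ultimately have "compact (nucleolus_stage v (Suc k))" using IH by auto
  moreover have "nucleolus_stage v (Suc k) \<noteq> {}"
    using continuous_attains_inf[OF IH cont] by auto
  ultimately show ?case by simp
qed

lemma mem_nucleolus_stage:
  assumes "x0 \<in> nucleolus_stage v k" and "(\<Sum>j\<in>UNIV. z$j) \<le> 1"
    and "\<And>i. i \<le> k \<Longrightarrow> kth_excess v i z \<le> kth_excess v i x0"
  shows "z \<in> nucleolus_stage v k"
  using assms
proof (induction k)
  case 0
  then show ?case by force
next
  case (Suc k)
  then have z: "z \<in> nucleolus_stage v k" by simp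
  have "kth_excess v k z \<le> kth_excess v k x0" using Suc.prems(3) by simp
  with z Suc.prems(1) show ?case by (auto intro: order.trans)
qed

lemma lex_minimal_exists:
  fixes v :: "'n::finite set \<Rightarrow> real"
  shows "\<exists>x. lex_minimal v x"
proof -
  let ?N = "card (Pow (UNIV::'n set))"
  obtain x0 where x0: "x0 \<in> nucleolus_stage v ?N"
    using nucleolus_stage_compact_nonempty[of ?N v] by auto
  have x0_stage: "x0 \<in> nucleolus_stage v k" if "k \<le> ?N" for k
    using nucleolus_stage_antimono[OF that] x0 by auto
  have len: "length (excess_vector v y) = ?N" for y
    by (simp add: excess_vector_eq_desc_values length_desc_values)
  have "lex_minimal v (\<lambda>j. x0$j)"
    unfolding lex_minimal_def
  proof (intro conjI allI impI notI)
    show "coal_sum (\<lambda>j. x0$j) UNIV \<le> 1" using x0_stage[of 0] by (simp add: coal_sum_def)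
  next
    fix y assume y: "coal_sum y UNIV \<le> 1"
      and "lex_smaller (excess_vector v y) (excess_vector v (\<lambda>j. x0$j))"
    then obtain k where k: "k < ?N"
      and take: "take k (excess_vector v y) = take k (excess_vector v (\<lambda>j. x0$j))"
      and lt: "excess_vector v y ! k < excess_vector v (\<lambda>j. x0$j) ! k"
      unfolding lex_smaller_def len by blast
    define z :: "real^'n" where "z = (\<chi> j. y j)"
    have zy: "(\<lambda>j. z$j) = y" by (simp add: z_def)
    have prefix: "kth_excess v i z \<le> kth_excess v i x0" if "i \<le> k" for i
    proof (cases "i = k")
      case True
      then show ?thesis using lt by (simp add: kth_excess_def zy)
    next
      case False
      then have "excess_vector v y ! i = excess_vector v (\<lambda>j. x0$j) ! i"
        using that take by (metis le_neq_implies_less nth_take)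
      then show ?thesis by (simp add: kth_excess_def zy)
    qed
    have sum_z: "(\<Sum>j\<in>UNIV. z$j) \<le> 1" using y by (simp add: z_def coal_sum_def)
    have "z \<in> nucleolus_stage v k"
      using mem_nucleolus_stage[OF x0_stage[of k] sum_z prefix] k by simp
    moreover have "x0 \<in> nucleolus_stage v (Suc k)" using x0_stage[of "Suc k"] k by simp
    ultimately have "kth_excess v k x0 \<le> kth_excess v k z" by simp
    then show False using lt by (simp add: kth_excess_def zy)
  qed
  then show ?thesis by blast
qed

lemma lex_minimal_nucleolus: "lex_minimal v (nucleolus v)"
  unfolding nucleolus_def using lex_minimal_exists lex_minimal_unique by (metis theI)

section \<open>Simple games\<close>

lemma simple_game_cases: "simple_game v \<Longrightarrow> v S = 0 \<or> v S = 1"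
  using rangeI[of v S] unfolding simple_game_def by auto

lemma simple_game_mono: "simple_game v \<Longrightarrow> S \<subseteq> T \<Longrightarrow> v S \<le> v T"
  unfolding simple_game_def by (simp add: monoD)

lemma simple_game_empty:
  assumes g: "simple_game v"
  shows "v {} = 0"
proof -
  have "0 \<in> range v" using g by (simp add: simple_game_def)
  then obtain B where "v B = 0" by auto
  then have "v {} \<le> 0" using simple_game_mono[OF g, of "{}" B] by simp
  then show ?thesis using simple_game_cases[OF g, of "{}"] by auto
qed

lemma simple_game_veto:
  assumes g: "simple_game v" and "v (- {i}) = 0" and "i \<notin> S"
  shows "v S = 0"
  using assms simple_game_mono[OF g, of S "- {i}"] simple_game_cases[OF g, of S] by auto

lemma lex_minimal_nonneg:
  fixes v :: "'n::finite set \<Rightarrow> real"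
  assumes g: "simple_game v" and lm: "lex_minimal v x"
  shows "0 \<le> x j"
proof (rule ccontr)
  assume "\<not> 0 \<le> x j"
  then have xj: "x j < 0" by simp
  have sum_x: "sum x UNIV = 1" using lex_minimal_coal_sum[OF lm] by (simp add: coal_sum_def)
  let ?m = "Max (range (\<lambda>S. excess v S x))"
  have "?m \<in> range (\<lambda>S. excess v S x)" by (intro Max_in) auto
  then obtain S0 where S0_max: "excess v S0 x = ?m" by (metis rangeE)
  have S0: "excess v S x \<le> excess v S0 x" for S unfolding S0_max by (intro Max_ge) auto
  have insert_j: "excess v S x < excess v (insert j S) x" if "j \<notin> S" for S
    using that xj simple_game_mono[OF g subset_insertI, of S j] by (simp add: excess_eq_sum)
  have "j \<in> S0" using insert_j S0 by (meson leD)
  have "\<exists>k. k \<notin> S0 \<and> 0 < x k"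
  proof (rule ccontr)
    assume "\<not> ?thesis"
    then have "sum x (- S0) \<le> 0" by (intro sum_nonpos) auto
    moreover have "sum x UNIV = sum x S0 + sum x (- S0)"
      using sum.subset_diff[of S0 UNIV x] by (simp add: Compl_eq_Diff_UNIV)
    moreover have "v S0 \<le> 1" using simple_game_cases[OF g, of S0] by auto
    moreover have "0 < excess v {j} x"
      using xj simple_game_cases[OF g, of "{j}"] by (auto simp: excess_eq_sum)
    ultimately show False using S0[of "{j}"] sum_x by (simp add: excess_eq_sum)
  qed
  then obtain k where k: "k \<notin> S0" "0 < x k" by auto
  then obtain S where "k \<in> S" "j \<notin> S" "excess v S0 x \<le> excess v S x"
    using lex_minimal_balanced_surplus[OF lm, of k j S0] \<open>j \<in> S0\<close> by auto
  then show False using insert_j[of S] S0[of "insert j S"] by simp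
qed

lemma lex_minimal_le_half_of_not_veto:
  fixes v :: "'n::finite set \<Rightarrow> real"
  assumes g: "simple_game v" and lm: "lex_minimal v x" and wins: "v (- {i}) = 1"
  shows "x i \<le> 1 / 2"
proof -
  have "- {i} \<noteq> {}" using wins simple_game_empty[OF g] by auto
  then obtain j where "j \<in> - {i}" by auto
  then obtain S where S: "i \<in> S" "j \<notin> S" "excess v (- {i}) x \<le> excess v S x"
    using lex_minimal_balanced_surplus[OF lm, of i j "- {i}"] by auto
  have "excess v (- {i}) x = x i"
    using excess_Compl_singleton[OF lex_minimal_coal_sum[OF lm]] wins by simp
  moreover have "x i \<le> sum x S"
    using S(1) lex_minimal_nonneg[OF g lm] by (intro member_le_sum) auto
  moreover have "v S \<le> 1" using simple_game_cases[OF g, of S] by auto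
  ultimately show ?thesis using S(3) by (simp add: excess_eq_sum)
qed

lemma lex_minimal_le_half_of_veto:
  fixes v :: "'n::finite set \<Rightarrow> real"
  assumes g: "simple_game v" and lm: "lex_minimal v x" and veto: "v (- {i}) = 0"
    and "x i < 1"
  shows "x i \<le> 1 / 2"
proof -
  have sum_x: "coal_sum x UNIV = 1" by (rule lex_minimal_coal_sum[OF lm])
  have nonpos: "excess v S x \<le> 0" for S
  proof (rule lex_minimal_excess_le[OF lm, of "\<lambda>k. if k = i then 1 else 0"])
    show "coal_sum (\<lambda>k. if k = i then 1 else 0) UNIV \<le> 1" by (simp add: coal_sum_def)
    show "excess v S' (\<lambda>k. if k = i then 1 else 0) \<le> 0" for S'
      using simple_game_cases[OF g, of S'] simple_game_veto[OF g veto, of S']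
      by (auto simp: excess_eq_sum)
  qed
  have "sum x (- {i}) = 1 - x i"
    using sum_x sum.remove[of UNIV i x] by (simp add: coal_sum_def Compl_eq_Diff_UNIV)
  then have "0 < sum x (- {i})" using \<open>x i < 1\<close> by simp
  then obtain k where k: "k \<noteq> i" "0 < x k"
    using sum_nonpos[of "- {i}" x] by (force simp: not_le)
  have "v (- {k}) \<noteq> 1"
    using nonpos[of "- {k}"] excess_Compl_singleton[OF sum_x, of v k] k(2) by simp
  then have veto_k: "v (- {k}) = 0" using simple_game_cases[OF g] by blast
  obtain S where S: "i \<in> S" "k \<notin> S" "excess v (- {i}) x \<le> excess v S x"
    using lex_minimal_balanced_surplus[OF lm, of i k "- {i}"] k(1) by auto
  have "x i \<le> sum x S"
    using S(1) lex_minimal_nonneg[OF g lm] by (intro member_le_sum) auto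
  then have "excess v S x \<le> - x i"
    using simple_game_veto[OF g veto_k S(2)] by (simp add: excess_eq_sum)
  moreover have "excess v (- {i}) x = x i - 1" using excess_Compl_singleton[OF sum_x] veto by simp
  ultimately show ?thesis using S(3) by simp
qed

theorem theorem5:
  fixes v :: "'n::finite set \<Rightarrow> real" and i :: 'n
  assumes "simple_game v"
    and "nucleolus v i < 1"
  shows "nucleolus v i \<le> 1 / 2"
proof (cases "v (- {i}) = 1")
  case True
  then show ?thesis
    using lex_minimal_le_half_of_not_veto[OF assms(1) lex_minimal_nucleolus] by blast
next
  case False
  then have "v (- {i}) = 0" using simple_game_cases[OF assms(1)] by blast
  then show ?thesis
    using lex_minimal_le_half_of_veto[OF assms(1) lex_minimal_nucleolus _ assms(2)] by blast
qed

end
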